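(* Let $n$ be an even positive integer, $a,b\in\mathbb{C}$, $b\ne0$. Let $A^{\dagger}$ be the $n\times n$ tridiagonal matrix with diagonal entries $a$ and $A^{\dagger}_{k,k+1}=A^{\dagger}_{k+1,k}=(-1)^{k+1}b$ for $k=1,\dots,n-1$, let $\tilde J^{\dagger}$ be the $n\times n$ exchange matrix ($\tilde J^{\dagger}_{i,n+1-i}=1$, all other entries $0$), and let $\tilde A^{\dagger}$ be the anti-tridiagonal matrix with entries $\tilde A^{\dagger}_{ij}=A^{\dagger}_{n+1-i,j}$ (i.e. $\tilde A^{\dagger}=\tilde J^{\dagger}A^{\dagger}$; its first row is $(0,\dots,0,b,a)$, its second row $(0,\dots,0,-b,a,b)$, etc.). Then for every positive integer $s$, $$(\tilde A^{\dagger})^s=\begin{cases}(A^{\dagger})^s, & s \text{ even},\\ \tilde J^{\dagger}(A^{\dagger})^s, & s\text{ odd}.\end{cases}$$ *)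

theory Defs
  imports Complex_Main "Jordan_Normal_Form.Matrix"
begin

(* Matrices are 0-indexed: entry (i,j) with i,j < n corresponds to the paper's (i+1,j+1). *)

(* A-dagger: diagonal a; paper's A_{k,k+1} = A_{k+1,k} = (-1)^(k+1) b for k = 1..n-1,
   i.e. 0-indexed entries (k,k+1) and (k+1,k) equal (-1)^k b for k = 0..n-2. *)
definition Adag :: "nat \<Rightarrow> complex \<Rightarrow> complex \<Rightarrow> complex mat" where
  "Adag n a b = mat n n (\<lambda>(i,j).
      if i = j then a
      else if j = i + 1 then (-1) ^ i * b
      else if i = j + 1 then (-1) ^ j * b
      else 0)"

definition Jdag :: "nat \<Rightarrow> complex mat" where
  "Jdag n = mat n n (\<lambda>(i,j). if j = n - 1 - i then 1 else 0)"

definition Atilde :: "nat \<Rightarrow> complex \<Rightarrow> complex \<Rightarrow> complex mat" where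
  "Atilde n a b = mat n n (\<lambda>(i,j). Adag n a b $$ (n - 1 - i, j))"

end

theory Submission
  imports Defs
begin

text \<open>For even \<open>n\<close> the matrix \<open>A = Adag n a b\<close> is centrosymmetric: reversing both
  indices maps the superdiagonal entry \<open>(k, k + 1)\<close> to the subdiagonal entry
  \<open>(n - 2 - k, n - 1 - k)\<close>, whose sign \<open>(-1) ^ (n - 2 - k)\<close> equals \<open>(-1) ^ k\<close> since \<open>n\<close> is
  even. Hence the exchange matrix \<open>J\<close> commutes with \<open>A\<close>, and as \<open>J * J = 1\<close> and
  \<open>Atilde n a b = J * A\<close>, the power \<open>(J * A) ^ s = J ^ s * A ^ s\<close> is \<open>A ^ s\<close> or \<open>J * A ^ s\<close>
  according to the parity of \<open>s\<close>.\<close>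

lemma pow_mat_mult_distrib:
  fixes A B :: "'a :: semiring_1 mat"
  assumes "A \<in> carrier_mat n n" and "B \<in> carrier_mat n n" and "A * B = B * A"
  shows "(A * B) ^\<^sub>m k = A ^\<^sub>m k * B ^\<^sub>m k"
proof -
  interpret semiring "ring_mat TYPE('a) n ()" by (rule semiring_mat)
  have "A * B \<in> carrier_mat n n"
    using assms(1,2) by simp
  with assms show ?thesis
    using pow_mult_distrib[of A B k, unfolded ring_mat_simps]
    by (simp only: pow_mat_ring_pow[of _ n _ "()"])
qed

lemma pow_mat_involution:
  fixes J :: "'a :: semiring_1 mat"
  assumes "J \<in> carrier_mat n n" and "J * J = 1\<^sub>m n"
  shows "J ^\<^sub>m k = (if even k then 1\<^sub>m n else J)"
  by (induction k) (use assms in auto)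

lemma Adag_carrier [simp]: "Adag n a b \<in> carrier_mat n n"
  by (simp add: Adag_def)

lemma Jdag_carrier [simp]: "Jdag n \<in> carrier_mat n n"
  by (simp add: Jdag_def)

lemma Jdag_mult:
  assumes "M \<in> carrier_mat n m"
  shows "Jdag n * M = mat n m (\<lambda>(i, j). M $$ (n - 1 - i, j))"
proof (rule eq_matI)
  fix i j assume "i < dim_row (mat n m (\<lambda>(i, j). M $$ (n - 1 - i, j)))"
    and "j < dim_col (mat n m (\<lambda>(i, j). M $$ (n - 1 - i, j)))"
  then show "(Jdag n * M) $$ (i, j) = mat n m (\<lambda>(i, j). M $$ (n - 1 - i, j)) $$ (i, j)"
    using assms
    by (simp add: Jdag_def scalar_prod_def if_distrib[where f="\<lambda>x. x * _"] cong: if_cong)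
qed (use assms in \<open>auto simp: Jdag_def\<close>)

lemma mult_Jdag:
  assumes "M \<in> carrier_mat m n"
  shows "M * Jdag n = mat m n (\<lambda>(i, j). M $$ (i, n - 1 - j))"
proof (rule eq_matI)
  fix i j assume "i < dim_row (mat m n (\<lambda>(i, j). M $$ (i, n - 1 - j)))"
    and "j < dim_col (mat m n (\<lambda>(i, j). M $$ (i, n - 1 - j)))"
  then have "i < m" "j < n" by auto
  have "(M * Jdag n) $$ (i, j) = (\<Sum>k<n. M $$ (i, k) * (if k = n - 1 - j then 1 else 0))"
    using \<open>i < m\<close> \<open>j < n\<close> assms
    by (auto simp: Jdag_def scalar_prod_def atLeast0LessThan intro!: sum.cong)
  also have "\<dots> = M $$ (i, n - 1 - j)"
    using \<open>j < n\<close> by (simp add: if_distrib[where f="\<lambda>x. _ * x"] cong: if_cong)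
  finally show "(M * Jdag n) $$ (i, j) = mat m n (\<lambda>(i, j). M $$ (i, n - 1 - j)) $$ (i, j)"
    using \<open>i < m\<close> \<open>j < n\<close> by simp
qed (use assms in \<open>auto simp: Jdag_def\<close>)

lemma Jdag_mult_Jdag: "Jdag n * Jdag n = 1\<^sub>m n"
  by (subst Jdag_mult[OF Jdag_carrier]) (rule eq_matI, auto simp: Jdag_def)

lemma Atilde_eq_Jdag_mult: "Atilde n a b = Jdag n * Adag n a b"
  by (simp add: Jdag_mult[OF Adag_carrier] Atilde_def)

lemma Adag_centrosymmetric:
  assumes "even n" and "i < n" and "j < n"
  shows "Adag n a b $$ (n - 1 - i, n - 1 - j) = Adag n a b $$ (i, j)"
proof -
  have sign: "(-1::complex) ^ (n - 2 - k) = (-1) ^ k" if "k + 2 \<le> n" for k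
    using \<open>even n\<close> that by (simp add: minus_one_power_iff even_diff_nat)
  consider "i = j" | "j = i + 1" | "i = j + 1" | "i \<noteq> j" "j \<noteq> i + 1" "i \<noteq> j + 1"
    by blast
  then show ?thesis
  proof cases
    case 2
    then have "n - 1 - i = Suc (n - 2 - i)" "n - 1 - j = n - 2 - i"
      using assms by auto
    then show ?thesis
      using 2 assms sign[of i] by (simp add: Adag_def)
  next
    case 3
    then have "n - 1 - j = Suc (n - 2 - j)" "n - 1 - i = n - 2 - j"
      using assms by auto
    then show ?thesis
      using 3 assms sign[of j] by (simp add: Adag_def)
  qed (use assms in \<open>auto simp: Adag_def\<close>)
qed

lemma Jdag_commute_centrosymmetric:
  assumes "M \<in> carrier_mat n n"
    and "\<And>i j. i < n \<Longrightarrow> j < n \<Longrightarrow> M $$ (n - 1 - i, n - 1 - j) = M $$ (i, j)"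
  shows "Jdag n * M = M * Jdag n"
  unfolding Jdag_mult[OF assms(1)] mult_Jdag[OF assms(1)]
proof (rule eq_matI)
  fix i j assume "i < dim_row (mat n n (\<lambda>(i, j). M $$ (i, n - 1 - j)))"
    and "j < dim_col (mat n n (\<lambda>(i, j). M $$ (i, n - 1 - j)))"
  then show "mat n n (\<lambda>(i, j). M $$ (n - 1 - i, j)) $$ (i, j)
      = mat n n (\<lambda>(i, j). M $$ (i, n - 1 - j)) $$ (i, j)"
    using assms(2)[of i "n - 1 - j"] by auto
qed auto

lemma Jdag_Adag_commute:
  assumes "even n"
  shows "Jdag n * Adag n a b = Adag n a b * Jdag n"
  using Adag_centrosymmetric[OF assms] by (intro Jdag_commute_centrosymmetric) simp_all

theorem lemma5:
  fixes n s :: nat and a b :: complex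
  assumes "even n" and "n > 0" and "b \<noteq> 0" and "s > 0"
  shows "Atilde n a b ^\<^sub>m s =
           (if even s then Adag n a b ^\<^sub>m s else Jdag n * (Adag n a b ^\<^sub>m s))"
proof -
  have "Atilde n a b ^\<^sub>m s = Jdag n ^\<^sub>m s * Adag n a b ^\<^sub>m s"
    unfolding Atilde_eq_Jdag_mult
    by (rule pow_mat_mult_distrib[of _ n])
      (simp_all add: Jdag_Adag_commute[OF \<open>even n\<close>])
  also have "\<dots> = (if even s then 1\<^sub>m n else Jdag n) * Adag n a b ^\<^sub>m s"
    by (simp add: pow_mat_involution[of _ n] Jdag_mult_Jdag)
  finally show ?thesis
    by (simp add: left_mult_one_mat[of _ n n])
qed

end
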